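(* Let $G$ be a $2$-connected cubic multigraph, let $H$ be a peninsula of $G$ with internal port $p$, and let $C$ be a core of $H$. Then $p\in E(C)$.
   Context: Multigraphs are finite and loopless, parallel edges allowed. A cut of a multigraph $M$ is a bipartition $(U,V(M)\setminus U)$; its cut-set is the set of edges between the sides. A tombolo-cut is a cut whose cut-set (tombolo) has exactly $2$ edges. For a tombolo-cut of $G$ with tombolo $\{a_1b_1,a_2b_2\}$, $a_1,a_2\in U$, the pairs $\{a_1,a_2\}$, $\{b_1,b_2\}$ are its port-pairs. A virtual subgraph of $G$ (on vertex set $X\subseteq V(G)$) is the multigraph on $X$ whose edges are all edges of $G$ with both ends in $X$ (real edges) plus one (possibly parallel) virtual edge $ab$ for every port-pair $\{a,b\}\subseteq X$ of a tombolo of $G$ both of whose edges are not edges of $G$ inside $X$. A peninsula is a virtual subgraph $H$ such that $(V(H),V(G)\setminus V(H))$ is a tombolo-cut, or $H=G$. The internal port of a peninsula $H\ne G$ is its unique virtual edge; if $H=G$ an arbitrary edge is fixed as internal port. A core of a peninsula $H$ with internal port $p=xy$ is obtained as follows: set $C_1=H$; while $C_i$ has a cut $(U,V(C_i)\setminus U)$ whose cut-set (in $C_i$) has exactly $2$ edges, neither of which is $p$, let $C_{i+1}$ be the virtual subgraph of $G$ on $U$ if $\{x,y\}\subseteq U$, and on $V(C_i)\setminus U$ otherwise; when no such cut exists, the current $C_i$ is a core. *)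

theory Defs
  imports Main
begin

text \<open>A finite loopless multigraph is given by a vertex set V, an edge set E
  (edge identifiers) and an endpoint map ends; parallel edges are distinct
  identifiers with the same endpoints.\<close>

definition multigraph :: "'v set \<Rightarrow> 'e set \<Rightarrow> ('e \<Rightarrow> 'v set) \<Rightarrow> bool" where
  "multigraph V E ends \<longleftrightarrow> finite V \<and> finite E \<and>
     (\<forall>e\<in>E. ends e \<subseteq> V \<and> card (ends e) = 2)"

definition cubic :: "'v set \<Rightarrow> 'e set \<Rightarrow> ('e \<Rightarrow> 'v set) \<Rightarrow> bool" where
  "cubic V E ends \<longleftrightarrow> (\<forall>v\<in>V. card {e\<in>E. v \<in> ends e} = 3)"

definition adj_in :: "'e set \<Rightarrow> ('e \<Rightarrow> 'v set) \<Rightarrow> 'v set \<Rightarrow> 'v \<Rightarrow> 'v \<Rightarrow> bool" where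
  "adj_in E ends S u v \<longleftrightarrow> u \<in> S \<and> v \<in> S \<and> (\<exists>e\<in>E. ends e = {u, v})"

definition connected_on :: "'e set \<Rightarrow> ('e \<Rightarrow> 'v set) \<Rightarrow> 'v set \<Rightarrow> bool" where
  "connected_on E ends S \<longleftrightarrow> S \<noteq> {} \<and> (\<forall>u\<in>S. \<forall>v\<in>S. (adj_in E ends S)\<^sup>*\<^sup>* u v)"

definition two_connected :: "'v set \<Rightarrow> 'e set \<Rightarrow> ('e \<Rightarrow> 'v set) \<Rightarrow> bool" where
  "two_connected V E ends \<longleftrightarrow> card V \<ge> 3 \<and> connected_on E ends V \<and>
     (\<forall>v\<in>V. connected_on E ends (V - {v}))"

definition cutset :: "'e set \<Rightarrow> ('e \<Rightarrow> 'v set) \<Rightarrow> 'v set \<Rightarrow> 'e set" where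
  "cutset E ends U = {e\<in>E. card (ends e \<inter> U) = 1}"

definition tombolo_cut :: "'v set \<Rightarrow> 'e set \<Rightarrow> ('e \<Rightarrow> 'v set) \<Rightarrow> 'v set \<Rightarrow> bool" where
  "tombolo_cut V E ends U \<longleftrightarrow> U \<subseteq> V \<and> card (cutset E ends U) = 2"

text \<open>Virtual edges of the virtual subgraph on X: indexed by a tombolo T of G
  together with a port-pair P of it (the ends of T on one side U of a
  tombolo-cut with tombolo T), such that P is a genuine pair contained in X and
  no edge of T lies inside X.\<close>
definition virt_edges :: "'v set \<Rightarrow> 'e set \<Rightarrow> ('e \<Rightarrow> 'v set) \<Rightarrow> 'v set \<Rightarrow> ('e set \<times> 'v set) set" where
  "virt_edges V E ends X = {(T, P). \<exists>U. tombolo_cut V E ends U \<and> T = cutset E ends U \<and>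
      P = (\<Union>(ends ` T)) \<inter> U \<and> card P = 2 \<and> P \<subseteq> X \<and> (\<forall>e\<in>T. \<not> ends e \<subseteq> X)}"

type_synonym ('v, 'e) vedge = "'e + ('e set \<times> 'v set)"

text \<open>Edge set of the virtual subgraph of G on X (its vertex set is X).\<close>
definition vsub_edges :: "'v set \<Rightarrow> 'e set \<Rightarrow> ('e \<Rightarrow> 'v set) \<Rightarrow> 'v set \<Rightarrow> ('v, 'e) vedge set" where
  "vsub_edges V E ends X = Inl ` {e\<in>E. ends e \<subseteq> X} \<union> Inr ` virt_edges V E ends X"

fun vends :: "('e \<Rightarrow> 'v set) \<Rightarrow> ('v, 'e) vedge \<Rightarrow> 'v set" where
  "vends ends (Inl e) = ends e"
| "vends ends (Inr TP) = snd TP"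

text \<open>X is the vertex set of a peninsula (virtual subgraph on X) of G.\<close>
definition peninsula :: "'v set \<Rightarrow> 'e set \<Rightarrow> ('e \<Rightarrow> 'v set) \<Rightarrow> 'v set \<Rightarrow> bool" where
  "peninsula V E ends X \<longleftrightarrow> X = V \<or> tombolo_cut V E ends X"

text \<open>p is (a valid choice of) the internal port of the peninsula on X: its
  unique virtual edge if X \<noteq> V, an arbitrary edge of G if X = V.\<close>
definition internal_port :: "'v set \<Rightarrow> 'e set \<Rightarrow> ('e \<Rightarrow> 'v set) \<Rightarrow> 'v set \<Rightarrow> ('v, 'e) vedge \<Rightarrow> bool" where
  "internal_port V E ends X p \<longleftrightarrow>
     (X = V \<and> p \<in> Inl ` E) \<or> (X \<noteq> V \<and> Inr ` virt_edges V E ends X = {p})"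

definition reducing_cut :: "'v set \<Rightarrow> 'e set \<Rightarrow> ('e \<Rightarrow> 'v set) \<Rightarrow> ('v, 'e) vedge \<Rightarrow> 'v set \<Rightarrow> 'v set \<Rightarrow> bool" where
  "reducing_cut V E ends p Y U \<longleftrightarrow> U \<subseteq> Y \<and>
     card (cutset (vsub_edges V E ends Y) (vends ends) U) = 2 \<and>
     p \<notin> cutset (vsub_edges V E ends Y) (vends ends) U"

inductive core_step :: "'v set \<Rightarrow> 'e set \<Rightarrow> ('e \<Rightarrow> 'v set) \<Rightarrow> ('v, 'e) vedge \<Rightarrow> 'v set \<Rightarrow> 'v set \<Rightarrow> bool"
  for V E ends p X where
  start: "core_step V E ends p X X"
| step: "core_step V E ends p X Y \<Longrightarrow> reducing_cut V E ends p Y U \<Longrightarrow>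
           core_step V E ends p X (if vends ends p \<subseteq> U then U else Y - U)"

definition is_core :: "'v set \<Rightarrow> 'e set \<Rightarrow> ('e \<Rightarrow> 'v set) \<Rightarrow> 'v set \<Rightarrow> ('v, 'e) vedge \<Rightarrow> 'v set \<Rightarrow> bool" where
  "is_core V E ends X p Y \<longleftrightarrow> core_step V E ends p X Y \<and> \<not> (\<exists>U. reducing_cut V E ends p Y U)"

end

theory Submission
  imports Defs
begin

text \<open>A reducing cut never
  has p in its cut-set, so it cannot separate the two ends of p: they lie either both in U
  or both outside U, i.e. on the side the construction keeps. Restricting a virtual subgraph
  to a smaller vertex set keeps every edge whose ends stay inside, so p survives every step.\<close>

lemma two_set_not_split:
  assumes "card S = 2" "card (S \<inter> U) \<noteq> 1"
  shows "S \<subseteq> U \<or> S \<inter> U = {}"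
proof -
  have "finite S" using assms(1) by (simp add: card_ge_0_finite)
  then have "card (S \<inter> U) \<le> 2" using assms(1) by (metis card_mono inf_le1)
  moreover have "card (S \<inter> U) = 2 \<Longrightarrow> S \<subseteq> U"
    using \<open>finite S\<close> assms(1) by (metis card_subset_eq inf_le1 le_iff_inf)
  moreover have "card (S \<inter> U) = 0 \<Longrightarrow> S \<inter> U = {}" using \<open>finite S\<close> by simp
  ultimately show ?thesis using assms(2) by linarith
qed

lemma vends_subset_if_in_vsub_edges:
  assumes "p \<in> vsub_edges V E ends Y"
  shows "vends ends p \<subseteq> Y"
  using assms by (auto simp: vsub_edges_def virt_edges_def)

lemma vsub_edges_restrict:
  assumes "p \<in> vsub_edges V E ends Y" "vends ends p \<subseteq> Y'" "Y' \<subseteq> Y"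
  shows "p \<in> vsub_edges V E ends Y'"
proof (cases p)
  case (Inl e)
  then show ?thesis using assms by (auto simp: vsub_edges_def)
next
  case (Inr TP)
  obtain T P where TP: "TP = (T, P)" by fastforce
  from assms(1) Inr TP have "(T, P) \<in> virt_edges V E ends Y" by (auto simp: vsub_edges_def)
  then obtain U where U: "tombolo_cut V E ends U" "T = cutset E ends U"
      "P = (\<Union>(ends ` T)) \<inter> U" "card P = 2" "\<forall>e\<in>T. \<not> ends e \<subseteq> Y"
    unfolding virt_edges_def by blast
  moreover have "P \<subseteq> Y'" using assms(2) Inr TP by simp
  moreover have "\<forall>e\<in>T. \<not> ends e \<subseteq> Y'" using U(5) assms(3) by blast
  ultimately have "(T, P) \<in> virt_edges V E ends Y'"
    unfolding virt_edges_def by blast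
  then show ?thesis using Inr TP by (auto simp: vsub_edges_def)
qed

lemma internal_port_in_vsub_edges:
  assumes "multigraph V E ends" "internal_port V E ends X p"
  shows "p \<in> vsub_edges V E ends X" "card (vends ends p) = 2"
proof -
  have "p \<in> vsub_edges V E ends X \<and> card (vends ends p) = 2"
  proof (cases "X = V")
    case True
    then obtain e where "e \<in> E" "p = Inl e"
      using assms(2) unfolding internal_port_def by auto
    then show ?thesis using True assms(1) by (auto simp: multigraph_def vsub_edges_def)
  next
    case False
    then have "p \<in> Inr ` virt_edges V E ends X"
      using assms(2) unfolding internal_port_def by auto
    then show ?thesis by (auto simp: vsub_edges_def virt_edges_def)
  qed
  then show "p \<in> vsub_edges V E ends X" "card (vends ends p) = 2" by simp_all
qed

lemma core_step_keeps_edge: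
  assumes "core_step V E ends p X Y" "p \<in> vsub_edges V E ends X" "card (vends ends p) = 2"
  shows "p \<in> vsub_edges V E ends Y"
  using assms(1)
proof induction
  case start
  then show ?case using assms(2) .
next
  case (step Y U)
  from \<open>reducing_cut V E ends p Y U\<close> have "U \<subseteq> Y"
    and "p \<notin> cutset (vsub_edges V E ends Y) (vends ends) U"
    unfolding reducing_cut_def by auto
  with step.IH have "card (vends ends p \<inter> U) \<noteq> 1" unfolding cutset_def by auto
  then have not_split: "vends ends p \<subseteq> U \<or> vends ends p \<inter> U = {}"
    using two_set_not_split assms(3) by blast
  have "vends ends p \<subseteq> Y" using step.IH by (rule vends_subset_if_in_vsub_edges)
  show ?case
  proof (cases "vends ends p \<subseteq> U")
    case True
    then show ?thesis using vsub_edges_restrict[OF step.IH True \<open>U \<subseteq> Y\<close>] by simp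
  next
    case False
    with not_split \<open>vends ends p \<subseteq> Y\<close> have "vends ends p \<subseteq> Y - U" by blast
    then show ?thesis using vsub_edges_restrict[OF step.IH _ Diff_subset] False by simp
  qed
qed

theorem lemma16:
  fixes V :: "'v set" and E :: "'e set" and ends :: "'e \<Rightarrow> 'v set"
    and X Y :: "'v set" and p :: "('v, 'e) vedge"
  assumes "multigraph V E ends"
    and "cubic V E ends"
    and "two_connected V E ends"
    and "peninsula V E ends X"
    and "internal_port V E ends X p"
    and "is_core V E ends X p Y"
  shows "p \<in> vsub_edges V E ends Y"
proof -
  have "core_step V E ends p X Y" using assms(6) unfolding is_core_def by simp
  then show ?thesis
    using core_step_keeps_edge internal_port_in_vsub_edges[OF assms(1,5)] by blast
qed

end
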